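(* Let $\Sigma$ be a ranked alphabet, $B$ a strong bimonoid and $\mathcal{A}=(Q,\delta,F)$ a $(\Sigma,B)$-wta with the finite order property. For every $(q,b)\in Q\times H_{\mathcal{A}}$ and $\xi=\sigma(\xi_1,\dots,\xi_k)\in T_\Sigma$, $$p_\xi(q,b)=\sum_{(q_1,b_1)\dots(q_k,b_k)\in S_\xi(q,b)}\ \prod_{i=1}^k p_{\xi_i}(q_i,b_i).$$
   Context: Ranked alphabet $\Sigma$ ($\Sigma^{(0)}\ne\emptyset$), trees $T_\Sigma$, positions $\mathrm{pos}(\xi)$; strong bimonoid $(B,\oplus,\otimes,\mathbb{0},\mathbb{1})$ (commutative monoid $(B,\oplus,\mathbb{0})$, monoid $(B,\otimes,\mathbb{1})$, $\mathbb{0}\ne\mathbb{1}$, $\mathbb{0}$ absorbing). For $b\in B$, $nb=b\oplus\cdots\oplus b$ ($n$ times, $0b=\mathbb{0}$); $b$ has finite order if $\{nb\mid n\in\mathbb{N}\}$ is finite; then its index $i(b)$ is the least $i\ge1$ with $ib=(i+k)b$ for some $k\ge1$, and its period $p(b)$ the least $p\ge1$ with $i(b)b=(i(b)+p)b$. $(\Sigma,B)$-wta $\mathcal{A}=(Q,\delta,F)$: $Q$ finite nonempty, $\delta_k:Q^k\times\Sigma^{(k)}\times Q\to B$, $F:Q\to B$. A $q$-run on $\xi$ is $\rho:\mathrm{pos}(\xi)\to Q$ with $\rho(\varepsilon)=q$; $R_{\mathcal{A}}(q,\xi)$ the set of them; $\rho|_i(w)=\rho(iw)$; $\mathrm{wt}_{\mathcal{A}}(\rho)=\big(\bigotimes_{i=1}^k\mathrm{wt}_{\mathcal{A}}(\rho|_i)\big)\otimes\delta_k(\rho(1)\dots\rho(k),\sigma,\rho(\varepsilon))$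 for $\xi=\sigma(\xi_1,\dots,\xi_k)$. $H_{\mathcal{A}}$ is the smallest subset of $B$ containing $\bigcup_k\mathrm{im}(\delta_k)$ and closed under $\otimes$. $\mathcal{A}$ has the finite order property if $H_{\mathcal{A}}$ is finite and each element of $H_{\mathcal{A}}\otimes\mathrm{im}(F)=\{a\otimes c\mid a\in H_{\mathcal{A}},c\in\mathrm{im}(F)\}$ has finite order in $(B,\oplus,\mathbb{0})$. Then $i_{\mathcal{A}}=\max\{i(b)\mid b\in H_{\mathcal{A}}\otimes\mathrm{im}(F)\}$, $p_{\mathcal{A}}=\mathrm{lcm}\{p(b)\mid b\in H_{\mathcal{A}}\otimes\mathrm{im}(F)\}$, and $J_{\mathcal{A}}(n)=n$ if $n<i_{\mathcal{A}}$, $J_{\mathcal{A}}(n)=i_{\mathcal{A}}+((n-i_{\mathcal{A}})\bmod p_{\mathcal{A}})$ otherwise. For $(q,b)\in Q\times H_{\mathcal{A}}$: $R_{\mathcal{A}}(q,\xi,b)=\{\rho\in R_{\mathcal{A}}(q,\xi)\mid\mathrm{wt}_{\mathcal{A}}(\rho)=b\}$, $p_\xi(q,b)=|R_{\mathcal{A}}(q,\xi,b)|$, $\pi_\xi(q,b)=J_{\mathcal{A}}(p_\xi(q,b))$. For $\xi=\sigma(\xi_1,\dots,\xi_k)$, $S_\xi(q,b)$ is the set of tuples $((q_1,b_1),\dots,(q_k,b_k))\in(Q\times H_{\mathcal{A}})^k$ with $\pi_{\xi_i}(q_i,b_i)>0$ for all $i\in[k]$ and $\big(\bigotimes_{i=1}^k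 b_i\big)\otimes\delta_k(q_1\dots q_k,\sigma,q)=b$. (Sums and products in the claim are of natural numbers.) *)

theory Defs
  imports "HOL-Library.FuncSet"
begin

text \<open>A ranked alphabet is a finite set Sig of symbols with a rank function rk.
  Trees are unranked node-labelled trees; the trees over the ranked alphabet
  (T_Sigma) are those that are well-ranked.\<close>

datatype 'f tree = Node 'f "'f tree list"

definition ranked_alphabet :: "'f set \<Rightarrow> ('f \<Rightarrow> nat) \<Rightarrow> bool" where
  "ranked_alphabet Sig rk \<longleftrightarrow> finite Sig \<and> (\<exists>\<sigma>\<in>Sig. rk \<sigma> = 0)"

fun wf_tree :: "'f set \<Rightarrow> ('f \<Rightarrow> nat) \<Rightarrow> 'f tree \<Rightarrow> bool" where
  "wf_tree Sig rk (Node f ts) \<longleftrightarrow> f \<in> Sig \<and> length ts = rk f \<and> (\<forall>t\<in>set ts. wf_tree Sig rk t)"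

text \<open>Positions are lists of child indices; children are indexed from 0
  (index i here corresponds to i+1 in the paper).\<close>

inductive is_pos :: "'f tree \<Rightarrow> nat list \<Rightarrow> bool" where
  root: "is_pos t []"
| child: "i < length ts \<Longrightarrow> is_pos (ts ! i) w \<Longrightarrow> is_pos (Node g ts) (i # w)"

definition positions :: "'f tree \<Rightarrow> nat list set" where
  "positions t = {w. is_pos t w}"

definition nat_times :: "('b \<Rightarrow> 'b \<Rightarrow> 'b) \<Rightarrow> 'b \<Rightarrow> nat \<Rightarrow> 'b \<Rightarrow> 'b" where
  "nat_times bplus bzero n b = ((bplus b) ^^ n) bzero"

definition strong_bimonoid :: "('b \<Rightarrow> 'b \<Rightarrow> 'b) \<Rightarrow> ('b \<Rightarrow> 'b \<Rightarrow> 'b) \<Rightarrow> 'b \<Rightarrow> 'b \<Rightarrow> bool" where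
  "strong_bimonoid bplus btimes bzero bone \<longleftrightarrow>
     (\<forall>a b c. bplus (bplus a b) c = bplus a (bplus b c)) \<and>
     (\<forall>a b. bplus a b = bplus b a) \<and>
     (\<forall>a. bplus bzero a = a) \<and>
     (\<forall>a b c. btimes (btimes a b) c = btimes a (btimes b c)) \<and>
     (\<forall>a. btimes bone a = a \<and> btimes a bone = a) \<and>
     bzero \<noteq> bone \<and>
     (\<forall>a. btimes bzero a = bzero \<and> btimes a bzero = bzero)"

definition finite_order :: "('b \<Rightarrow> 'b \<Rightarrow> 'b) \<Rightarrow> 'b \<Rightarrow> 'b \<Rightarrow> bool" where
  "finite_order bplus bzero b \<longleftrightarrow> finite (range (\<lambda>n. nat_times bplus bzero n b))"

definition order_index :: "('b \<Rightarrow> 'b \<Rightarrow> 'b) \<Rightarrow> 'b \<Rightarrow> 'b \<Rightarrow> nat" where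
  "order_index bplus bzero b =
     (LEAST i. 1 \<le> i \<and> (\<exists>k\<ge>1. nat_times bplus bzero i b = nat_times bplus bzero (i + k) b))"

definition order_period :: "('b \<Rightarrow> 'b \<Rightarrow> 'b) \<Rightarrow> 'b \<Rightarrow> 'b \<Rightarrow> nat" where
  "order_period bplus bzero b =
     (LEAST p. 1 \<le> p \<and> nat_times bplus bzero (order_index bplus bzero b) b
                         = nat_times bplus bzero (order_index bplus bzero b + p) b)"

definition mprod :: "('b \<Rightarrow> 'b \<Rightarrow> 'b) \<Rightarrow> 'b \<Rightarrow> 'b list \<Rightarrow> 'b" where
  "mprod btimes bone bs = foldr btimes bs bone"

text \<open>A wta (Q, delta, F): delta qs sigma q is delta_k(q_1...q_k, sigma, q) for
  k = rk sigma = length qs.\<close>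

definition wta :: "'f set \<Rightarrow> ('f \<Rightarrow> nat) \<Rightarrow> 'q set \<Rightarrow> bool" where
  "wta Sig rk Q \<longleftrightarrow> finite Q \<and> Q \<noteq> {}"

definition im_delta :: "'f set \<Rightarrow> ('f \<Rightarrow> nat) \<Rightarrow> 'q set \<Rightarrow> ('q list \<Rightarrow> 'f \<Rightarrow> 'q \<Rightarrow> 'b) \<Rightarrow> 'b set" where
  "im_delta Sig rk Q \<delta> =
     {\<delta> qs \<sigma> q | qs \<sigma> q. \<sigma> \<in> Sig \<and> qs \<in> lists Q \<and> length qs = rk \<sigma> \<and> q \<in> Q}"

inductive_set H_A :: "'f set \<Rightarrow> ('f \<Rightarrow> nat) \<Rightarrow> 'q set \<Rightarrow> ('q list \<Rightarrow> 'f \<Rightarrow> 'q \<Rightarrow> 'b)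
                       \<Rightarrow> ('b \<Rightarrow> 'b \<Rightarrow> 'b) \<Rightarrow> 'b set"
  for Sig rk Q \<delta> btimes where
  base: "a \<in> im_delta Sig rk Q \<delta> \<Longrightarrow> a \<in> H_A Sig rk Q \<delta> btimes"
| mult: "a \<in> H_A Sig rk Q \<delta> btimes \<Longrightarrow> c \<in> H_A Sig rk Q \<delta> btimes \<Longrightarrow> btimes a c \<in> H_A Sig rk Q \<delta> btimes"

definition HF :: "'f set \<Rightarrow> ('f \<Rightarrow> nat) \<Rightarrow> 'q set \<Rightarrow> ('q list \<Rightarrow> 'f \<Rightarrow> 'q \<Rightarrow> 'b) \<Rightarrow> ('q \<Rightarrow> 'b)
                  \<Rightarrow> ('b \<Rightarrow> 'b \<Rightarrow> 'b) \<Rightarrow> 'b set" where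
  "HF Sig rk Q \<delta> F btimes = {btimes a c | a c. a \<in> H_A Sig rk Q \<delta> btimes \<and> c \<in> F ` Q}"

definition finite_order_property where
  "finite_order_property Sig rk Q \<delta> F bplus btimes bzero \<longleftrightarrow>
     finite (H_A Sig rk Q \<delta> btimes) \<and>
     (\<forall>b\<in>HF Sig rk Q \<delta> F btimes. finite_order bplus bzero b)"

definition i_A where
  "i_A Sig rk Q \<delta> F bplus btimes bzero = Max (order_index bplus bzero ` HF Sig rk Q \<delta> F btimes)"

definition p_A where
  "p_A Sig rk Q \<delta> F bplus btimes bzero = Lcm (order_period bplus bzero ` HF Sig rk Q \<delta> F btimes)"

definition J_A where
  "J_A Sig rk Q \<delta> F bplus btimes bzero n =
     (let i = i_A Sig rk Q \<delta> F bplus btimes bzero; p = p_A Sig rk Q \<delta> F bplus btimes bzero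
      in if n < i then n else i + ((n - i) mod p))"

text \<open>A q-run on xi: a map from positions of xi to Q (extensional, i.e. undefined
  outside the positions) with the root mapped to q.\<close>

definition runs :: "'q set \<Rightarrow> 'q \<Rightarrow> 'f tree \<Rightarrow> (nat list \<Rightarrow> 'q) set" where
  "runs Q q \<xi> = {\<rho> \<in> positions \<xi> \<rightarrow>\<^sub>E Q. \<rho> [] = q}"

function wt :: "('q list \<Rightarrow> 'f \<Rightarrow> 'q \<Rightarrow> 'b) \<Rightarrow> ('b \<Rightarrow> 'b \<Rightarrow> 'b) \<Rightarrow> 'b
                 \<Rightarrow> 'f tree \<Rightarrow> (nat list \<Rightarrow> 'q) \<Rightarrow> 'b" where
  "wt \<delta> btimes bone (Node \<sigma> ts) \<rho> =
     btimes (mprod btimes bone (map (\<lambda>(i, t). wt \<delta> btimes bone t (\<lambda>w. \<rho> (i # w))) (zip [0..<length ts] ts)))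
           (\<delta> (map (\<lambda>i. \<rho> [i]) [0..<length ts]) \<sigma> (\<rho> []))"
  by pat_completeness auto
termination
  apply (relation "measure (\<lambda>(_, _, _, t, _). size t)")
   apply simp
  apply (auto dest!: set_zip_rightD)
  by (simp add: less_Suc_eq_le size_list_estimation')

definition p_count where
  "p_count Q \<delta> btimes bone \<xi> q b = card {\<rho> \<in> runs Q q \<xi>. wt \<delta> btimes bone \<xi> \<rho> = b}"

definition pi_count where
  "pi_count Sig rk Q \<delta> F bplus btimes bzero bone \<xi> q b =
     J_A Sig rk Q \<delta> F bplus btimes bzero (p_count Q \<delta> btimes bone \<xi> q b)"

text \<open>S_xi(q,b) for xi = Node sigma ts, as lists of length k of pairs (q_i, b_i).\<close>
definition S_set where
  "S_set Sig rk Q \<delta> F bplus btimes bzero bone \<sigma> ts q b =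
     {qbs. length qbs = length ts \<and>
           (\<forall>i<length ts. fst (qbs ! i) \<in> Q \<and> snd (qbs ! i) \<in> H_A Sig rk Q \<delta> btimes \<and>
               0 < pi_count Sig rk Q \<delta> F bplus btimes bzero bone (ts ! i) (fst (qbs ! i)) (snd (qbs ! i))) \<and>
           btimes (mprod btimes bone (map snd qbs)) (\<delta> (map fst qbs) \<sigma> q) = b}"

end

theory Submission
  imports Defs
begin

(* A q-run on sigma(xi_1, ..., xi_k) is the same thing as a k-tuple of runs on the subtrees
   xi_i (with arbitrary root states), and its weight depends only on the list of root states
   and weights (q_i, b_i) of the components.  Grouping the tuples by this list turns the
   number of runs into a sum of products of the counts p_{xi_i}(q_i, b_i).  The lists that
   occur are exactly S_xi(q, b): every index of an element of finite order is at least 1,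
   so i_A >= 1 and J_A n > 0 iff n > 0, i.e. pi_{xi_i}(q_i, b_i) > 0 iff (q_i, b_i) occurs. *)

lemma PiE_filter_map_eq:
  assumes "length ks = k"
  shows "{c \<in> \<Pi>\<^sub>E i\<in>{..<k}. X i. map (\<lambda>i. g i (c i)) [0..<k] = ks} =
           (\<Pi>\<^sub>E i\<in>{..<k}. {x \<in> X i. g i x = ks ! i})"
proof (intro equalityI subsetI)
  fix c assume "c \<in> {c \<in> \<Pi>\<^sub>E i\<in>{..<k}. X i. map (\<lambda>i. g i (c i)) [0..<k] = ks}"
  then show "c \<in> (\<Pi>\<^sub>E i\<in>{..<k}. {x \<in> X i. g i x = ks ! i})"
    by (auto simp: PiE_iff)
next
  fix c assume "c \<in> (\<Pi>\<^sub>E i\<in>{..<k}. {x \<in> X i. g i x = ks ! i})"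
  then show "c \<in> {c \<in> \<Pi>\<^sub>E i\<in>{..<k}. X i. map (\<lambda>i. g i (c i)) [0..<k] = ks}"
    using assms by (auto simp: PiE_iff intro!: nth_equalityI)
qed

lemma card_PiE_filter_map_eq_sum_prod:
  fixes X :: "nat \<Rightarrow> 'a set" and g :: "nat \<Rightarrow> 'a \<Rightarrow> 'k"
  assumes fin: "\<And>i. i < k \<Longrightarrow> finite (X i)"
  shows "card {c \<in> \<Pi>\<^sub>E i\<in>{..<k}. X i. P (map (\<lambda>i. g i (c i)) [0..<k])} =
           (\<Sum>ks \<in> {ks. length ks = k \<and> (\<forall>i<k. ks ! i \<in> g i ` X i) \<and> P ks}.
              \<Prod>i<k. card {x \<in> X i. g i x = ks ! i})"
proof -
  let ?key = "\<lambda>c. map (\<lambda>i. g i (c i)) [0..<k]"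
  let ?K = "{ks. length ks = k \<and> (\<forall>i<k. ks ! i \<in> g i ` X i) \<and> P ks}"
  let ?fibre = "\<lambda>ks. {c \<in> \<Pi>\<^sub>E i\<in>{..<k}. X i. ?key c = ks}"
  have union: "{c \<in> \<Pi>\<^sub>E i\<in>{..<k}. X i. P (?key c)} = (\<Union>ks\<in>?K. ?fibre ks)"
  proof (intro equalityI subsetI)
    fix c assume "c \<in> {c \<in> \<Pi>\<^sub>E i\<in>{..<k}. X i. P (?key c)}"
    then show "c \<in> (\<Union>ks\<in>?K. ?fibre ks)"
      by (intro UN_I[of "?key c"]) auto
  qed auto
  have "finite ?K"
  proof (rule finite_subset)
    show "?K \<subseteq> {ks. set ks \<subseteq> (\<Union>i<k. g i ` X i) \<and> length ks = k}"
    proof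
      fix ks assume ks: "ks \<in> ?K"
      have "set ks \<subseteq> (\<Union>i<k. g i ` X i)"
      proof
        fix y assume "y \<in> set ks"
        then obtain i where "i < k" "y = ks ! i" using ks by (auto simp: in_set_conv_nth)
        then show "y \<in> (\<Union>i<k. g i ` X i)" using ks by blast
      qed
      then show "ks \<in> {ks. set ks \<subseteq> (\<Union>i<k. g i ` X i) \<and> length ks = k}"
        using ks by simp
    qed
    show "finite {ks. set ks \<subseteq> (\<Union>i<k. g i ` X i) \<and> length ks = k}"
      using fin by (intro finite_lists_length_eq) auto
  qed
  moreover have "\<forall>ks\<in>?K. finite (?fibre ks)"
  proof
    have "finite (\<Pi>\<^sub>E i\<in>{..<k}. X i)" by (rule finite_PiE) (simp_all add: fin)
    then show "finite (?fibre ks)" for ks by (rule rev_finite_subset) blast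
  qed
  moreover have "\<forall>ks\<in>?K. \<forall>ks'\<in>?K. ks \<noteq> ks' \<longrightarrow> ?fibre ks \<inter> ?fibre ks' = {}"
    by blast
  ultimately have "card {c \<in> \<Pi>\<^sub>E i\<in>{..<k}. X i. P (?key c)} = (\<Sum>ks\<in>?K. card (?fibre ks))"
    unfolding union by (rule card_UN_disjoint)
  also have "\<dots> = (\<Sum>ks\<in>?K. \<Prod>i<k. card {x \<in> X i. g i x = ks ! i})"
    by (rule sum.cong) (simp_all add: PiE_filter_map_eq card_PiE)
  finally show ?thesis .
qed

lemma is_pos_Node_iff:
  "is_pos (Node g ts) w \<longleftrightarrow> w = [] \<or> (\<exists>i w'. w = i # w' \<and> i < length ts \<and> is_pos (ts ! i) w')"
  by (auto elim: is_pos.cases intro: is_pos.intros)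

lemma root_in_positions [simp]: "[] \<in> positions t"
  by (simp add: positions_def is_pos.root)

lemma Cons_in_positions_Node_iff [simp]:
  "i # w \<in> positions (Node g ts) \<longleftrightarrow> i < length ts \<and> w \<in> positions (ts ! i)"
  by (auto simp: positions_def is_pos_Node_iff)

lemma positions_Node: "positions (Node g ts) = insert [] (\<Union>i<length ts. (#) i ` positions (ts ! i))"
  by (auto simp: positions_def is_pos_Node_iff)

lemma finite_positions: "finite (positions t)"
  by (induction t) (auto simp: positions_Node)

lemma finite_PiE_positions: "finite Q \<Longrightarrow> finite (positions t \<rightarrow>\<^sub>E Q)"
  by (simp add: finite_PiE finite_positions)

definition child_runs :: "nat \<Rightarrow> (nat list \<Rightarrow> 'q) \<Rightarrow> nat \<Rightarrow> nat list \<Rightarrow> 'q" where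
  "child_runs k \<rho> = (\<lambda>i\<in>{..<k}. \<lambda>w. \<rho> (i # w))"

definition graft_runs :: "'q \<Rightarrow> nat \<Rightarrow> (nat \<Rightarrow> nat list \<Rightarrow> 'q) \<Rightarrow> nat list \<Rightarrow> 'q" where
  "graft_runs q k c w = (case w of [] \<Rightarrow> q | i # w' \<Rightarrow> if i < k then c i w' else undefined)"

lemma child_runs_in_PiE:
  "\<rho> \<in> positions (Node g ts) \<rightarrow>\<^sub>E Q \<Longrightarrow>
     child_runs (length ts) \<rho> \<in> (\<Pi>\<^sub>E i\<in>{..<length ts}. positions (ts ! i) \<rightarrow>\<^sub>E Q)"
  by (auto simp: child_runs_def PiE_iff extensional_def)

lemma bij_betw_child_runs:
  assumes "q \<in> Q"
  shows "bij_betw (child_runs (length ts)) (runs Q q (Node g ts))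
           (\<Pi>\<^sub>E i\<in>{..<length ts}. positions (ts ! i) \<rightarrow>\<^sub>E Q)"
proof (rule bij_betwI[where g = "graft_runs q (length ts)"])
  show "child_runs (length ts) \<in> runs Q q (Node g ts) \<rightarrow> (\<Pi>\<^sub>E i\<in>{..<length ts}. positions (ts ! i) \<rightarrow>\<^sub>E Q)"
  proof
    fix \<rho> assume "\<rho> \<in> runs Q q (Node g ts)"
    then show "child_runs (length ts) \<rho> \<in> (\<Pi>\<^sub>E i\<in>{..<length ts}. positions (ts ! i) \<rightarrow>\<^sub>E Q)"
      by (intro child_runs_in_PiE[where g = g]) (simp add: runs_def)
  qed
  show "graft_runs q (length ts) \<in> (\<Pi>\<^sub>E i\<in>{..<length ts}. positions (ts ! i) \<rightarrow>\<^sub>E Q) \<rightarrow> runs Q q (Node g ts)"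
  proof
    fix c assume c: "c \<in> (\<Pi>\<^sub>E i\<in>{..<length ts}. positions (ts ! i) \<rightarrow>\<^sub>E Q)"
    have "graft_runs q (length ts) c w \<in> Q" if "w \<in> positions (Node g ts)" for w
      using that c assms by (cases w) (auto simp: graft_runs_def)
    moreover have "graft_runs q (length ts) c w = undefined" if "w \<notin> positions (Node g ts)" for w
      using that c by (cases w) (auto simp: graft_runs_def PiE_iff extensional_def)
    ultimately show "graft_runs q (length ts) c \<in> runs Q q (Node g ts)"
      by (auto simp: runs_def graft_runs_def PiE_iff extensional_def)
  qed
  show "graft_runs q (length ts) (child_runs (length ts) \<rho>) = \<rho>" if "\<rho> \<in> runs Q q (Node g ts)" for \<rho>
  proof
    fix w show "graft_runs q (length ts) (child_runs (length ts) \<rho>) w = \<rho> w"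
      using that by (cases w) (auto simp: runs_def graft_runs_def child_runs_def PiE_iff extensional_def)
  qed
  show "child_runs (length ts) (graft_runs q (length ts) c) = c"
    if "c \<in> (\<Pi>\<^sub>E i\<in>{..<length ts}. positions (ts ! i) \<rightarrow>\<^sub>E Q)" for c
    using that by (auto simp: child_runs_def graft_runs_def PiE_iff extensional_def)
qed

lemma wt_Node_child_runs:
  "wt \<delta> btimes bone (Node \<sigma> ts) \<rho> =
     btimes (mprod btimes bone (map (\<lambda>i. wt \<delta> btimes bone (ts ! i) (child_runs (length ts) \<rho> i)) [0..<length ts]))
            (\<delta> (map (\<lambda>i. child_runs (length ts) \<rho> i []) [0..<length ts]) \<sigma> (\<rho> []))"
proof -
  have "map (\<lambda>(i, t). wt \<delta> btimes bone t (\<lambda>w. \<rho> (i # w))) (zip [0..<length ts] ts) =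
          map (\<lambda>i. wt \<delta> btimes bone (ts ! i) (child_runs (length ts) \<rho> i)) [0..<length ts]"
    by (rule nth_equalityI) (auto simp: child_runs_def)
  moreover have "map (\<lambda>i. child_runs (length ts) \<rho> i []) [0..<length ts] = map (\<lambda>i. \<rho> [i]) [0..<length ts]"
    by (simp add: child_runs_def)
  ultimately show ?thesis by (simp only: wt.simps)
qed

lemma mprod_times_in_H_A:
  assumes "strong_bimonoid bplus btimes bzero bone"
    and "set xs \<subseteq> H_A Sig rk Q \<delta> btimes" and "d \<in> H_A Sig rk Q \<delta> btimes"
  shows "btimes (mprod btimes bone xs) d \<in> H_A Sig rk Q \<delta> btimes"
  using assms(2)
proof (induction xs)
  case Nil
  then show ?case using assms(1,3) by (simp add: mprod_def strong_bimonoid_def)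
next
  case (Cons x xs)
  have "btimes (mprod btimes bone (x # xs)) d = btimes x (btimes (mprod btimes bone xs) d)"
    using assms(1) by (simp add: mprod_def strong_bimonoid_def)
  then show ?case using Cons by (auto intro: H_A.mult)
qed

lemma wt_in_H_A:
  assumes "strong_bimonoid bplus btimes bzero bone"
  shows "wf_tree Sig rk t \<Longrightarrow> \<rho> \<in> positions t \<rightarrow>\<^sub>E Q \<Longrightarrow> wt \<delta> btimes bone t \<rho> \<in> H_A Sig rk Q \<delta> btimes"
proof (induction t arbitrary: \<rho>)
  case (Node \<sigma> ts)
  let ?c = "child_runs (length ts) \<rho>"
  have c: "?c i \<in> positions (ts ! i) \<rightarrow>\<^sub>E Q" if "i < length ts" for i
    using child_runs_in_PiE[OF Node.prems(2)] that by auto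
  have "set (map (\<lambda>i. wt \<delta> btimes bone (ts ! i) (?c i)) [0..<length ts]) \<subseteq> H_A Sig rk Q \<delta> btimes"
    using Node c by auto
  moreover have "\<delta> (map (\<lambda>i. ?c i []) [0..<length ts]) \<sigma> (\<rho> []) \<in> im_delta Sig rk Q \<delta>"
  proof -
    have "map (\<lambda>i. ?c i []) [0..<length ts] \<in> lists Q" and "\<rho> [] \<in> Q"
      using c Node.prems(2) by (auto simp: PiE_iff)
    moreover have "\<sigma> \<in> Sig" and "length ts = rk \<sigma>"
      using Node.prems(1) by simp_all
    ultimately show ?thesis
      unfolding im_delta_def by (intro CollectI exI[of _ "map (\<lambda>i. ?c i []) [0..<length ts]"]) auto
  qed
  ultimately show ?case
    unfolding wt_Node_child_runs by (intro mprod_times_in_H_A[OF assms] H_A.base)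
qed

lemma order_index_ge_1:
  assumes "finite_order bplus bzero b"
  shows "1 \<le> order_index bplus bzero b"
proof -
  let ?f = "\<lambda>n. nat_times bplus bzero n b"
  have "finite (?f ` {1..})"
    using assms unfolding finite_order_def by (rule finite_subset[rotated]) auto
  then have "\<not> inj_on ?f {1..}"
    using finite_imageD infinite_Ici by blast
  then obtain m n where "1 \<le> m" "1 \<le> n" "m \<noteq> n" "?f m = ?f n"
    unfolding inj_on_def by auto
  then have "\<exists>i. 1 \<le> i \<and> (\<exists>k\<ge>1. ?f i = ?f (i + k))"
    by (intro exI[of _ "min m n"] conjI exI[of _ "max m n - min m n"]) (auto simp: min_def max_def)
  then show ?thesis
    unfolding order_index_def by (rule LeastI2_ex) blast
qed

lemma finite_HF:
  assumes "finite (H_A Sig rk Q \<delta> btimes)" and "finite Q"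
  shows "finite (HF Sig rk Q \<delta> F btimes)"
proof -
  have "HF Sig rk Q \<delta> F btimes = case_prod btimes ` (H_A Sig rk Q \<delta> btimes \<times> F ` Q)"
    unfolding HF_def by auto
  then show ?thesis using assms by simp
qed

lemma i_A_ge_1:
  assumes "finite_order_property Sig rk Q \<delta> F bplus btimes bzero" and "finite Q"
    and "q \<in> Q" and "b \<in> H_A Sig rk Q \<delta> btimes"
  shows "1 \<le> i_A Sig rk Q \<delta> F bplus btimes bzero"
proof -
  have bq: "btimes b (F q) \<in> HF Sig rk Q \<delta> F btimes"
    unfolding HF_def using assms(3,4) by auto
  then have "1 \<le> order_index bplus bzero (btimes b (F q))"
    using assms(1) by (intro order_index_ge_1) (auto simp: finite_order_property_def)
  also have "\<dots> \<le> i_A Sig rk Q \<delta> F bplus btimes bzero"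
    unfolding i_A_def using assms(1,2) bq
    by (intro Max_ge finite_imageI finite_HF) (auto simp: finite_order_property_def)
  finally show ?thesis .
qed

lemma J_A_pos_iff:
  "1 \<le> i_A Sig rk Q \<delta> F bplus btimes bzero \<Longrightarrow> 0 < J_A Sig rk Q \<delta> F bplus btimes bzero n \<longleftrightarrow> 0 < n"
  unfolding J_A_def Let_def by auto

lemma p_count_eq_card_fibre:
  "p_count Q \<delta> btimes bone t q b = card {\<rho> \<in> positions t \<rightarrow>\<^sub>E Q. (\<rho> [], wt \<delta> btimes bone t \<rho>) = (q, b)}"
  unfolding p_count_def runs_def by (rule arg_cong[where f = card]) auto

lemma root_weight_in_image_iff:
  assumes sb: "strong_bimonoid bplus btimes bzero bone" and fin: "finite Q"
    and wf: "wf_tree Sig rk t" and iA: "1 \<le> i_A Sig rk Q \<delta> F bplus btimes bzero"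
  shows "(q, b) \<in> (\<lambda>\<rho>. (\<rho> [], wt \<delta> btimes bone t \<rho>)) ` (positions t \<rightarrow>\<^sub>E Q) \<longleftrightarrow>
           q \<in> Q \<and> b \<in> H_A Sig rk Q \<delta> btimes \<and> 0 < pi_count Sig rk Q \<delta> F bplus btimes bzero bone t q b"
proof -
  let ?fibre = "{\<rho> \<in> positions t \<rightarrow>\<^sub>E Q. (\<rho> [], wt \<delta> btimes bone t \<rho>) = (q, b)}"
  have "finite ?fibre"
    using finite_PiE_positions[OF fin] by (rule rev_finite_subset) blast
  then have "0 < pi_count Sig rk Q \<delta> F bplus btimes bzero bone t q b \<longleftrightarrow> ?fibre \<noteq> {}"
    unfolding pi_count_def J_A_pos_iff[OF iA] p_count_eq_card_fibre by (simp add: card_gt_0_iff)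
  moreover have "?fibre \<noteq> {} \<longleftrightarrow> (q, b) \<in> (\<lambda>\<rho>. (\<rho> [], wt \<delta> btimes bone t \<rho>)) ` (positions t \<rightarrow>\<^sub>E Q)"
    by auto
  moreover have "q \<in> Q \<and> b \<in> H_A Sig rk Q \<delta> btimes" if "\<rho> \<in> ?fibre" for \<rho>
    using that wt_in_H_A[OF sb wf] by (auto simp: PiE_iff)
  ultimately show ?thesis by blast
qed

lemma S_set_eq_root_weight_lists:
  assumes "strong_bimonoid bplus btimes bzero bone" and "finite Q"
    and "wf_tree Sig rk (Node \<sigma> ts)" and "1 \<le> i_A Sig rk Q \<delta> F bplus btimes bzero"
  shows "S_set Sig rk Q \<delta> F bplus btimes bzero bone \<sigma> ts q b =
           {qbs. length qbs = length ts \<and>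
              (\<forall>i<length ts. qbs ! i \<in> (\<lambda>\<rho>. (\<rho> [], wt \<delta> btimes bone (ts ! i) \<rho>)) ` (positions (ts ! i) \<rightarrow>\<^sub>E Q)) \<and>
              btimes (mprod btimes bone (map snd qbs)) (\<delta> (map fst qbs) \<sigma> q) = b}"
proof -
  have "qb \<in> (\<lambda>\<rho>. (\<rho> [], wt \<delta> btimes bone (ts ! i) \<rho>)) ` (positions (ts ! i) \<rightarrow>\<^sub>E Q) \<longleftrightarrow>
          fst qb \<in> Q \<and> snd qb \<in> H_A Sig rk Q \<delta> btimes \<and>
          0 < pi_count Sig rk Q \<delta> F bplus btimes bzero bone (ts ! i) (fst qb) (snd qb)"
    if "i < length ts" for i qb
    using root_weight_in_image_iff[OF assms(1,2) _ assms(4), of "ts ! i" "fst qb" "snd qb"] assms(3) that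
    by simp
  then show ?thesis
    unfolding S_set_def by (intro Collect_cong) auto
qed

theorem lemma7p2:
  fixes Sig :: "'f set" and rk :: "'f \<Rightarrow> nat"
    and bplus btimes :: "'b \<Rightarrow> 'b \<Rightarrow> 'b" and bzero bone :: 'b
    and Q :: "'q set" and \<delta> :: "'q list \<Rightarrow> 'f \<Rightarrow> 'q \<Rightarrow> 'b" and F :: "'q \<Rightarrow> 'b"
    and \<sigma> :: 'f and ts :: "'f tree list" and q :: 'q and b :: 'b
  assumes "ranked_alphabet Sig rk"
    and "strong_bimonoid bplus btimes bzero bone"
    and "wta Sig rk Q"
    and "finite_order_property Sig rk Q \<delta> F bplus btimes bzero"
    and "q \<in> Q" and "b \<in> H_A Sig rk Q \<delta> btimes"
    and "wf_tree Sig rk (Node \<sigma> ts)"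
  shows "p_count Q \<delta> btimes bone (Node \<sigma> ts) q b =
           (\<Sum>qbs \<in> S_set Sig rk Q \<delta> F bplus btimes bzero bone \<sigma> ts q b.
              \<Prod>i<length ts. p_count Q \<delta> btimes bone (ts ! i) (fst (qbs ! i)) (snd (qbs ! i)))"
proof -
  have fin: "finite Q" using assms(3) by (simp add: wta_def)
  have iA: "1 \<le> i_A Sig rk Q \<delta> F bplus btimes bzero" using i_A_ge_1[OF assms(4) fin assms(5,6)] .
  define k where "k = length ts"
  define X where "X i = positions (ts ! i) \<rightarrow>\<^sub>E Q" for i
  define g where "g i \<rho> = (\<rho> [], wt \<delta> btimes bone (ts ! i) \<rho>)" for i \<rho>
  define P where "P qbs \<longleftrightarrow> btimes (mprod btimes bone (map snd qbs)) (\<delta> (map fst qbs) \<sigma> q) = b" for qbs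
  have "p_count Q \<delta> btimes bone (Node \<sigma> ts) q b =
          card {\<rho> \<in> runs Q q (Node \<sigma> ts). P (map (\<lambda>i. g i (child_runs k \<rho> i)) [0..<k])}"
    unfolding p_count_def wt_Node_child_runs
    by (rule arg_cong[where f = card]) (auto simp: runs_def P_def g_def k_def o_def)
  also have "\<dots> = card {c \<in> \<Pi>\<^sub>E i\<in>{..<k}. X i. P (map (\<lambda>i. g i (c i)) [0..<k])}"
    unfolding k_def X_def
    by (rule bij_betw_same_card, rule bij_betw_Collect[OF bij_betw_child_runs[OF assms(5)]]) simp
  also have "\<dots> = (\<Sum>qbs \<in> {qbs. length qbs = k \<and> (\<forall>i<k. qbs ! i \<in> g i ` X i) \<and> P qbs}.
                    \<Prod>i<k. card {\<rho> \<in> X i. g i \<rho> = qbs ! i})"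
    by (rule card_PiE_filter_map_eq_sum_prod) (simp add: X_def finite_PiE_positions fin)
  also have "{qbs. length qbs = k \<and> (\<forall>i<k. qbs ! i \<in> g i ` X i) \<and> P qbs} =
               S_set Sig rk Q \<delta> F bplus btimes bzero bone \<sigma> ts q b"
    unfolding S_set_eq_root_weight_lists[OF assms(2) fin assms(7) iA] k_def X_def g_def P_def ..
  finally show ?thesis
    by (simp add: k_def X_def g_def p_count_eq_card_fibre)
qed

end
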